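(* Suppose there is a function $f:\mathbb{N}\to\mathbb{R}$ with $\lim_{n\to\infty} f(n)=\infty$ such that for every $n$, every instance with $n$ agents (with monotone valuations) and exactly $m=n+\lfloor f(n)\rfloor$ goods admits an EFX allocation. Then for every $n$ and $m$, every instance with $n$ agents (with monotone valuations) and $m$ goods admits an EFX allocation. *)

theory Defs
  imports Complex_Main
begin

definition monotone_valuation :: "nat \<Rightarrow> (nat set \<Rightarrow> real) \<Rightarrow> bool" where
  "monotone_valuation m v \<longleftrightarrow> (\<forall>S T. S \<subseteq> T \<longrightarrow> T \<subseteq> {..<m} \<longrightarrow> v S \<le> v T)"

definition is_allocation :: "nat \<Rightarrow> nat \<Rightarrow> (nat \<Rightarrow> nat set) \<Rightarrow> bool" where
  "is_allocation n m X \<longleftrightarrow>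
     (\<forall>i<n. X i \<subseteq> {..<m}) \<and>
     (\<forall>i<n. \<forall>j<n. i \<noteq> j \<longrightarrow> X i \<inter> X j = {}) \<and>
     (\<Union>i<n. X i) = {..<m}"

definition is_EFX :: "nat \<Rightarrow> (nat \<Rightarrow> nat set \<Rightarrow> real) \<Rightarrow> (nat \<Rightarrow> nat set) \<Rightarrow> bool" where
  "is_EFX n v X \<longleftrightarrow>
     (\<forall>i<n. \<forall>j<n. i \<noteq> j \<longrightarrow> (\<forall>g\<in>X j. v i (X j - {g}) \<le> v i (X i)))"

definition admits_EFX :: "nat \<Rightarrow> nat \<Rightarrow> (nat \<Rightarrow> nat set \<Rightarrow> real) \<Rightarrow> bool" where
  "admits_EFX n m v \<longleftrightarrow> (\<exists>X. is_allocation n m X \<and> is_EFX n v X)"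

definition EFX_exists :: "nat \<Rightarrow> nat \<Rightarrow> bool" where
  "EFX_exists n m \<longleftrightarrow>
     (\<forall>v. (\<forall>i<n. monotone_valuation m (v i)) \<longrightarrow> admits_EFX n m v)"

end

theory Submission
  imports Defs
begin

text \<open>Surplus goods can be made worthless to everybody,
  so EFX existence passes to fewer goods. An agent can be removed together with one good by
  adding a copy of agent 0 and a new good that both copies value above everything else: in an
  EFX allocation of the enlarged instance, whoever holds the new good must hold it alone (or the
  copy not holding it would envy), and handing that agent's place to the copy of agent 0 yields
  an EFX allocation of the original instance. Since \<open>f\<close> is unbounded, removing \<open>N - n\<close> agents
  from an instance with \<open>N\<close> agents and \<open>N + \<lfloor>f N\<rfloor>\<close> goods reaches any prescribed size.\<close>

lemma EFX_exists_fewer_goods: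
  assumes "EFX_exists n m'" "m \<le> m'"
  shows "EFX_exists n m"
  unfolding EFX_exists_def
proof (intro allI impI)
  fix v :: "nat \<Rightarrow> nat set \<Rightarrow> real"
  assume mono: "\<forall>i<n. monotone_valuation m (v i)"
  define v' where "v' i S = v i (S \<inter> {..<m})" for i S
  have "\<forall>i<n. monotone_valuation m' (v' i)"
    using mono unfolding monotone_valuation_def v'_def by (metis Int_mono Int_lower2 order_refl)
  then obtain X where X: "is_allocation n m' X" "is_EFX n v' X"
    using assms(1) unfolding EFX_exists_def admits_EFX_def by blast
  define Y where "Y i = X i \<inter> {..<m}" for i
  have "(\<Union>i<n. Y i) = (\<Union>i<n. X i) \<inter> {..<m}"
    unfolding Y_def by blast
  also have "\<dots> = {..<m}"
    using X(1) assms(2) unfolding is_allocation_def by auto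
  finally have "is_allocation n m Y"
    using X(1) unfolding is_allocation_def Y_def by blast
  moreover have "is_EFX n v Y"
    unfolding is_EFX_def
  proof (intro allI impI ballI)
    fix i j g assume "i < n" "j < n" "i \<noteq> j" "g \<in> Y j"
    then have "v' i (X j - {g}) \<le> v' i (X i)"
      using X(2) unfolding is_EFX_def Y_def by blast
    moreover have "(X j - {g}) \<inter> {..<m} = Y j - {g}"
      unfolding Y_def by blast
    ultimately show "v i (Y j - {g}) \<le> v i (Y i)"
      unfolding v'_def Y_def by simp
  qed
  ultimately show "admits_EFX n m v"
    unfolding admits_EFX_def by blast
qed

lemma UN_lessThan_fun_upd_last:
  assumes "p \<le> (n::nat)"
  shows "(\<Union>t<n. (X(p := X n)) t) = (\<Union>q\<in>{..n} - {p}. X q)"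
proof
  show "(\<Union>t<n. (X(p := X n)) t) \<subseteq> (\<Union>q\<in>{..n} - {p}. X q)"
  proof
    fix x assume "x \<in> (\<Union>t<n. (X(p := X n)) t)"
    then obtain t where t: "t < n" "x \<in> (X(p := X n)) t" by blast
    show "x \<in> (\<Union>q\<in>{..n} - {p}. X q)"
    proof (cases "t = p")
      case True
      then show ?thesis using t by (intro UN_I[of n]) auto
    next
      case False
      then show ?thesis using t by (intro UN_I[of t]) auto
    qed
  qed
  show "(\<Union>q\<in>{..n} - {p}. X q) \<subseteq> (\<Union>t<n. (X(p := X n)) t)"
  proof
    fix x assume "x \<in> (\<Union>q\<in>{..n} - {p}. X q)"
    then obtain q where q: "q \<le> n" "q \<noteq> p" "x \<in> X q" by auto
    show "x \<in> (\<Union>t<n. (X(p := X n)) t)"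
    proof (cases "q = n")
      case True
      then show ?thesis using q assms by (intro UN_I[of p]) auto
    next
      case False
      then show ?thesis using q by (intro UN_I[of q]) auto
    qed
  qed
qed

lemma is_allocation_drop_last_good:
  assumes "is_allocation (Suc n) (Suc m) X" "p \<le> n" "X p = {m}"
  shows "is_allocation n m (X(p := X n))"
proof -
  have below: "X q \<subseteq> {..<m}" if "q \<le> n" "q \<noteq> p" for q
  proof -
    have "X q \<subseteq> {..<Suc m}" "X q \<inter> X p = {}"
      using assms(1,2) that unfolding is_allocation_def by auto
    then show ?thesis using assms(3) by (auto simp: lessThan_Suc)
  qed
  have "(\<Union>t<n. (X(p := X n)) t) = (\<Union>q\<in>{..n} - {p}. X q)"
    using assms(2) by (rule UN_lessThan_fun_upd_last)
  also have "\<dots> = (\<Union>q<Suc n. X q) - {m}"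
    using below by (auto simp: assms(3) lessThan_Suc_atMost)
  also have "\<dots> = {..<m}"
    using assms(1) unfolding is_allocation_def by auto
  moreover have "X q \<inter> X r = {}" if "q \<le> n" "r \<le> n" "q \<noteq> r" for q r
    using assms(1) that unfolding is_allocation_def by auto
  ultimately show ?thesis
    using assms(2) below unfolding is_allocation_def by auto
qed
lemma EFX_singleton_if_coveted:
  assumes "is_EFX N V X" "\<beta> < N" "p < N" "\<beta> \<noteq> p" "d \<in> X p"
    and coveted: "\<And>S. d \<in> S \<Longrightarrow> S \<subseteq> X p \<Longrightarrow> V \<beta> (X \<beta>) < V \<beta> S"
  shows "X p = {d}"
proof -
  have "g = d" if "g \<in> X p" for g
  proof (rule ccontr)
    assume "g \<noteq> d"
    then have "V \<beta> (X \<beta>) < V \<beta> (X p - {g})"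
      by (intro coveted) (use assms(5) in auto)
    moreover have "V \<beta> (X p - {g}) \<le> V \<beta> (X \<beta>)"
      using assms(1-4) that unfolding is_EFX_def by blast
    ultimately show False by simp
  qed
  then show ?thesis using assms(5) by blast
qed

definition extended_valuation ::
    "nat \<Rightarrow> nat \<Rightarrow> (nat \<Rightarrow> nat set \<Rightarrow> real) \<Rightarrow> nat \<Rightarrow> nat set \<Rightarrow> real" where
  "extended_valuation n m v p S =
     v (if p = n then 0 else p) (S \<inter> {..<m}) +
     (if (p = 0 \<or> p = n) \<and> m \<in> S then v 0 {..<m} - v 0 {} + 1 else 0)"

lemma extended_valuation_below:
  assumes "S \<subseteq> {..<m}"
  shows "extended_valuation n m v p S = v (if p = n then 0 else p) S"
proof -
  have "S \<inter> {..<m} = S" "m \<notin> S"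
    using assms by auto
  then show ?thesis
    unfolding extended_valuation_def by simp
qed

lemma monotone_extended_valuation:
  assumes "0 < n" "\<forall>i<n. monotone_valuation m (v i)" "p \<le> n"
  shows "monotone_valuation (Suc m) (extended_valuation n m v p)"
  unfolding monotone_valuation_def
proof (intro allI impI)
  fix S T :: "nat set" assume "S \<subseteq> T"
  have mono: "v i A \<le> v i B" if "i < n" "A \<subseteq> B" "B \<subseteq> {..<m}" for i A B
    using assms(2) that unfolding monotone_valuation_def by blast
  have "(if p = n then 0 else p) < n"
    using assms(1,3) by auto
  then have "v (if p = n then 0 else p) (S \<inter> {..<m}) \<le> v (if p = n then 0 else p) (T \<inter> {..<m})"
    by (rule mono) (use \<open>S \<subseteq> T\<close> in auto)
  moreover have "0 < v 0 {..<m} - v 0 {} + 1"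
    using mono[of 0 "{}" "{..<m}"] assms(1) by simp
  ultimately show "extended_valuation n m v p S \<le> extended_valuation n m v p T"
    using \<open>S \<subseteq> T\<close> unfolding extended_valuation_def by auto
qed

lemma extended_valuation_clone_covets:
  assumes "monotone_valuation m (v 0)" "p = 0 \<or> p = n" "B \<subseteq> {..<m}" "m \<in> S"
  shows "extended_valuation n m v p B < extended_valuation n m v p S"
proof -
  have "v 0 {} \<le> v 0 (S \<inter> {..<m})"
    using assms(1) unfolding monotone_valuation_def by simp
  have "extended_valuation n m v p B = v 0 B"
    using assms(2,3) by (auto simp: extended_valuation_below)
  also have "\<dots> \<le> v 0 {..<m}"
    using assms(1,3) unfolding monotone_valuation_def by blast
  also have "\<dots> < v 0 (S \<inter> {..<m}) + (v 0 {..<m} - v 0 {} + 1)"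
    using \<open>v 0 {} \<le> v 0 (S \<inter> {..<m})\<close> by simp
  also have "\<dots> = extended_valuation n m v p S"
    using assms(2,4) unfolding extended_valuation_def by auto
  finally show ?thesis .
qed

lemma is_EFX_drop_last_good:
  assumes "\<forall>i<n. monotone_valuation m (v i)"
    and alloc: "is_allocation (Suc n) (Suc m) X"
    and efx: "is_EFX (Suc n) (extended_valuation n m v) X"
    and p: "p \<le> n" "X p = {m}"
  shows "is_EFX n v (X(p := X n))"
  unfolding is_EFX_def
proof (intro allI impI ballI)
  let ?V = "extended_valuation n m v" and ?Y = "X(p := X n)"
  fix t s g assume ts: "t < n" "s < n" "t \<noteq> s" and g: "g \<in> ?Y s"
  have below: "?Y r \<subseteq> {..<m}" if "r < n" for r
    using is_allocation_drop_last_good[OF alloc p] that unfolding is_allocation_def by blast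
  define s' where "s' = (if s = p then n else s)"
  have s': "s' \<le> n" "s' \<noteq> p" "?Y s = X s'"
    using ts(2) p(1) unfolding s'_def by auto
  have efx_s': "?V q (X s' - {g}) \<le> ?V q (X q)" if "q \<le> n" "q \<noteq> s'" for q
    using efx that s'(1) g unfolding is_EFX_def s'(3) by (meson le_imp_less_Suc)
  have "X s' - {g} \<subseteq> {..<m}"
    using below[OF ts(2)] s'(3) by auto
  then have V_lost: "?V q (X s' - {g}) = v (if q = n then 0 else q) (?Y s - {g})" for q
    unfolding s'(3) by (simp add: extended_valuation_below)
  have V_own: "?V q (?Y t) = v (if q = n then 0 else q) (?Y t)" for q
    using below[OF ts(1)] by (simp add: extended_valuation_below)
  show "v t (?Y s - {g}) \<le> v t (?Y t)"
  proof (cases "t = p")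
    case False
    then have "?Y t = X t" "t \<noteq> s'"
      using ts unfolding s'_def by auto
    then show ?thesis
      using efx_s'[of t] V_lost[of t] V_own[of t] ts(1) by simp
  next
    case True
    show ?thesis
    proof (cases "t = 0")
      case True
      then have "?Y t = X n" "s' \<noteq> n"
        using \<open>t = p\<close> ts unfolding s'_def by auto
      then show ?thesis
        using efx_s'[of n] V_lost[of n] V_own[of n] \<open>t = 0\<close> by simp
    next
      case False
      \<comment> \<open>\<open>t\<close> held only the new good, which it values like the empty bundle\<close>
      have "?V t (X s' - {g}) \<le> ?V t {m}"
        using efx_s'[of t] \<open>t = p\<close> s'(2) ts(1) p(2) by simp
      then have "v t (?Y s - {g}) \<le> v t {}"
        using V_lost[of t] False ts(1) unfolding extended_valuation_def by simp
      also have "\<dots> \<le> v t (?Y t)"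
        using assms(1) ts(1) below[OF ts(1)] unfolding monotone_valuation_def by blast
      finally show ?thesis .
    qed
  qed
qed

lemma EFX_exists_remove_agent:
  assumes "0 < n" "EFX_exists (Suc n) (Suc m)"
  shows "EFX_exists n m"
  unfolding EFX_exists_def
proof (intro allI impI)
  fix v :: "nat \<Rightarrow> nat set \<Rightarrow> real"
  assume mono: "\<forall>i<n. monotone_valuation m (v i)"
  let ?V = "extended_valuation n m v"
  have "\<forall>p<Suc n. monotone_valuation (Suc m) (?V p)"
    using monotone_extended_valuation[OF assms(1) mono] by simp
  then obtain X where alloc: "is_allocation (Suc n) (Suc m) X" and efx: "is_EFX (Suc n) ?V X"
    using assms(2) unfolding EFX_exists_def admits_EFX_def by blast
  obtain p where p: "p \<le> n" "m \<in> X p"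
    using alloc unfolding is_allocation_def by (metis UN_E lessThan_iff less_Suc_eq_le lessI)
  obtain \<beta> where \<beta>: "\<beta> = 0 \<or> \<beta> = n" "\<beta> \<noteq> p"
    using assms(1) by blast
  have "X p = {m}"
  proof (rule EFX_singleton_if_coveted[OF efx _ _ \<beta>(2) p(2)])
    have "\<beta> < Suc n"
      using \<beta>(1) by auto
    then have "X \<beta> \<inter> X p = {}" "X \<beta> \<subseteq> {..<Suc m}"
      using alloc \<beta>(2) p(1) unfolding is_allocation_def by auto
    then have "X \<beta> \<subseteq> {..<m}"
      using p(2) by (auto simp: lessThan_Suc)
    then show "?V \<beta> (X \<beta>) < ?V \<beta> S" if "m \<in> S" for S
      using extended_valuation_clone_covets[OF _ \<beta>(1) _ that] mono assms(1) by blast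
  qed (use \<beta> p in auto)
  then have "is_allocation n m (X(p := X n)) \<and> is_EFX n v (X(p := X n))"
    using is_allocation_drop_last_good[OF alloc p(1)] is_EFX_drop_last_good[OF mono alloc efx p(1)]
    by blast
  then show "admits_EFX n m v"
    unfolding admits_EFX_def by blast
qed

lemma EFX_exists_remove_agents:
  assumes "0 < n" "EFX_exists (n + k) (m + k)"
  shows "EFX_exists n m"
  using assms(2)
proof (induction k)
  case (Suc k)
  then show ?case
    using EFX_exists_remove_agent[of "n + k" "m + k"] assms(1) by simp
qed simp

theorem theorem2:
  fixes f :: "nat \<Rightarrow> real"
  assumes "filterlim f at_top sequentially"
    and "\<forall>n\<ge>1. \<forall>m::nat. int m = int n + \<lfloor>f n\<rfloor> \<longrightarrow> EFX_exists n m"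
  shows "\<forall>n\<ge>1. \<forall>m. EFX_exists n m"
proof (intro allI impI)
  fix n m :: nat assume "n \<ge> 1"
  have "\<forall>\<^sub>F N in sequentially. real m \<le> f N"
    using assms(1) by (simp add: filterlim_at_top)
  then have "\<forall>\<^sub>F N in sequentially. real m \<le> f N \<and> n \<le> N"
    using eventually_ge_at_top by (rule eventually_conj)
  then obtain N where N: "real m \<le> f N" "n \<le> N"
    unfolding eventually_sequentially by blast
  then have floor_f: "int m \<le> \<lfloor>f N\<rfloor>"
    by (simp add: le_floor_iff)
  have "EFX_exists N (N + nat \<lfloor>f N\<rfloor>)"
  proof (rule assms(2)[rule_format])
    show "N \<ge> 1"
      using N(2) \<open>n \<ge> 1\<close> by simp
    show "int (N + nat \<lfloor>f N\<rfloor>) = int N + \<lfloor>f N\<rfloor>"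
      using floor_f by linarith
  qed
  moreover have "m + (N - n) \<le> N + nat \<lfloor>f N\<rfloor>"
    using floor_f by linarith
  ultimately have "EFX_exists (n + (N - n)) (m + (N - n))"
    using N(2) by (metis EFX_exists_fewer_goods le_add_diff_inverse)
  then show "EFX_exists n m"
    using EFX_exists_remove_agents[of n "N - n" m] \<open>n \<ge> 1\<close> by simp
qed

end
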